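(* Let $d>2$ and let $\{|k\rangle\}_{k=0}^{d-1}$ be the standard basis of $\mathbb{C}^d$. Define $K_j:=\frac1{\sqrt2}|j\rangle\langle j+1\bmod d|$ for $j=0,\dots,d-1$ and $K_d:=\frac1{\sqrt2}\sum_{k=0}^{d-1}e^{\pi ik/d}|k\rangle\langle k|$, and $T(\rho):=\sum_{j=0}^dK_j\rho K_j^\dagger$ on $\mathcal{M}_d(\mathbb{C})$. Then $T$ is completely positive, trace-preserving, unital and primitive, and its matrix representation $\hat T$ satisfies $\mathrm{tr}[\hat T]>0$ and $\mathrm{tr}[\hat T^2]=0$. Consequently, for the multiset $\Lambda=\mathrm{spec}(T)\setminus\{0\}$ one has $\mu_1(\Lambda)>0$ but $\mu_2(\Lambda)=0$, and the inequality $\mu_k(\Lambda)^m\le D^{m-1}\mu_{km}(\Lambda)$ fails for $k=1,m=2$ for every $D\in\mathbb{N}$.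
   Context: $\mu_k(\Lambda):=\sum_{\lambda\in\Lambda}\lambda^k$ (with multiplicity). A positive linear map is primitive if its spectral radius is a non-degenerate eigenvalue with positive definite eigenvector and no other eigenvalue has modulus equal to the spectral radius. Unital: $T(\mathbbm{1})=\mathbbm{1}$; trace-preserving: $\mathrm{tr}[T(X)]=\mathrm{tr}[X]$. *)

theory Defs
  imports "Jordan_Normal_Form.Schur_Decomposition" "Jordan_Normal_Form.Spectral_Radius"
    "HOL-Library.Complex_Order"
begin

text \<open>Complex numbers carry the partial order of HOL-Library.Complex_Order:
  z \<le> w iff Re z \<le> Re w and Im z = Im w. So 0 < z means z is a positive real.\<close>

definition psd :: "nat \<Rightarrow> complex mat \<Rightarrow> bool" where
  "psd n A \<longleftrightarrow> A \<in> carrier_mat n n \<and>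
     (\<forall>v \<in> carrier_vec n. 0 \<le> conjugate v \<bullet> (A *\<^sub>v v))"

definition pos_def :: "nat \<Rightarrow> complex mat \<Rightarrow> bool" where
  "pos_def n A \<longleftrightarrow> A \<in> carrier_mat n n \<and>
     (\<forall>v \<in> carrier_vec n. v \<noteq> 0\<^sub>v n \<longrightarrow> 0 < conjugate v \<bullet> (A *\<^sub>v v))"

definition ketbra :: "nat \<Rightarrow> nat \<Rightarrow> nat \<Rightarrow> complex mat" where
  "ketbra d j l = mat d d (\<lambda>(a, b). if a = j \<and> b = l then 1 else 0)"

text \<open>Ampliation id_n \<otimes> T acting on an (n d) x (n d) matrix seen as n x n blocks of d x d matrices.\<close>
definition ampliation :: "nat \<Rightarrow> nat \<Rightarrow> (complex mat \<Rightarrow> complex mat) \<Rightarrow> complex mat \<Rightarrow> complex mat" where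
  "ampliation n d T X = mat (n * d) (n * d) (\<lambda>(a, b).
     T (mat d d (\<lambda>(p, q). X $$ ((a div d) * d + p, (b div d) * d + q))) $$ (a mod d, b mod d))"

definition completely_positive :: "nat \<Rightarrow> (complex mat \<Rightarrow> complex mat) \<Rightarrow> bool" where
  "completely_positive d T \<longleftrightarrow>
     (\<forall>n X. psd (n * d) X \<longrightarrow> psd (n * d) (ampliation n d T X))"

definition mtrace :: "complex mat \<Rightarrow> complex" where
  "mtrace A = (\<Sum>i < dim_row A. A $$ (i, i))"

definition trace_preserving :: "nat \<Rightarrow> (complex mat \<Rightarrow> complex mat) \<Rightarrow> bool" where
  "trace_preserving d T \<longleftrightarrow> (\<forall>X \<in> carrier_mat d d. mtrace (T X) = mtrace X)"

definition unital :: "nat \<Rightarrow> (complex mat \<Rightarrow> complex mat) \<Rightarrow> bool" where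
  "unital d T \<longleftrightarrow> T (1\<^sub>m d) = 1\<^sub>m d"

text \<open>Matrix representation of T on M_d(C) w.r.t. the matrix units, vectorising X as
  the d^2-vector with entry X(a,b) at index a*d+b.\<close>
definition mat_rep :: "nat \<Rightarrow> (complex mat \<Rightarrow> complex mat) \<Rightarrow> complex mat" where
  "mat_rep d T = mat (d * d) (d * d) (\<lambda>(i, j). T (ketbra d (j div d) (j mod d)) $$ (i div d, i mod d))"

definition map_spectrum :: "nat \<Rightarrow> (complex mat \<Rightarrow> complex mat) \<Rightarrow> complex multiset" where
  "map_spectrum d T = proots (char_poly (mat_rep d T))"

definition primitive :: "nat \<Rightarrow> (complex mat \<Rightarrow> complex mat) \<Rightarrow> bool" where
  "primitive d T \<longleftrightarrow>
     (let r = spectral_radius (mat_rep d T) in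
        count (map_spectrum d T) (complex_of_real r) = 1 \<and>
        (\<exists>X. pos_def d X \<and> T X = complex_of_real r \<cdot>\<^sub>m X) \<and>
        (\<forall>z \<in># map_spectrum d T. cmod z = r \<longrightarrow> z = complex_of_real r))"

definition moment :: "nat \<Rightarrow> complex multiset \<Rightarrow> complex" where
  "moment k \<Lambda> = (\<Sum>\<^sub># (image_mset (\<lambda>z. z ^ k) \<Lambda>))"

definition kraus :: "nat \<Rightarrow> nat \<Rightarrow> complex mat" where
  "kraus d j = (if j < d then complex_of_real (1 / sqrt 2) \<cdot>\<^sub>m ketbra d j ((j + 1) mod d)
     else complex_of_real (1 / sqrt 2) \<cdot>\<^sub>m
       mat d d (\<lambda>(a, b). if a = b then exp (\<i> * complex_of_real (pi * real a / real d)) else 0))"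

definition exT :: "nat \<Rightarrow> complex mat \<Rightarrow> complex mat" where
  "exT d \<rho> = mat d d (\<lambda>ab. \<Sum>j \<in> {0..d}. (kraus d j * \<rho> * mat_adjoint (kraus d j)) $$ ab)"

end

theory Submission
  imports Defs
begin

text \<open>
  Complete positivity holds for every Kraus map: the ampliation id_n \<otimes> T is an entrywise sum of
  congruences by the block diagonal matrices id_n \<otimes> K_j, which preserve positivity.
  Everything else follows from the entry formula
    T(\<rho>)(a,b) = [a = b] \<rho>(a+1,a+1) / 2 + \<omega>^a \<omega>^-b \<rho>(a,b) / 2   (indices mod d).
  It shows that T multiplies |a><b| (a \<noteq> b) by \<omega>^a \<omega>^-b / 2 and acts on the diagonal matrix
  units as (1 + cyclic shift) / 2, which the discrete Fourier transform diagonalises with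
  eigenvalues (1 + \<zeta>^x) / 2, \<zeta> = \<omega>^2. So R is similar to the diagonal matrix of these
  eigenvalues; this gives the spectrum, spectral radius 1 attained only by the simple
  eigenvalue 1 of the identity matrix, and tr R^k = \<mu>_k(spec T). Finally \<mu>_1 = |\<Sigma> \<omega>^a|^2 / 2 > 0,
  whereas \<mu>_2 reduces to character sums \<Sigma> \<zeta>^a = \<Sigma> \<zeta>^(2a) = 0, using d > 2.
\<close>

section \<open>Roots of unity\<close>

definition omega :: "nat \<Rightarrow> complex" where
  "omega d = cis (pi / real d)"

definition zeta :: "nat \<Rightarrow> complex" where
  "zeta d = omega d ^ 2"

lemma omega_pow: "omega d ^ k = cis (real k * pi / real d)"
  unfolding omega_def by (simp add: DeMoivre)

lemma zeta_pow: "zeta d ^ k = cis (2 * real k * pi / real d)"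
proof -
  have "zeta d ^ k = omega d ^ (2 * k)"
    by (simp add: zeta_def power_mult)
  thus ?thesis
    unfolding omega_pow by (simp add: mult.assoc)
qed

lemma exp_eq_omega_pow: "exp (\<i> * complex_of_real (pi * real a / real d)) = omega d ^ a"
  unfolding omega_pow cis_conv_exp by (simp add: field_simps)

lemma norm_omega [simp]: "cmod (omega d) = 1"
  unfolding omega_def by simp

lemma norm_omega_pow: "cmod (omega d ^ k) = 1"
  by (simp add: norm_power)

lemma norm_zeta_pow [simp]: "cmod (zeta d ^ k) = 1"
  unfolding zeta_pow by simp

lemma unit_mult_cnj: "cmod z = 1 \<Longrightarrow> z * cnj z = 1"
  using complex_norm_square[of z] by simp

lemma omega_pow_mult_cnj [simp]: "omega d ^ k * cnj (omega d) ^ k = 1"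
  using unit_mult_cnj[OF norm_omega_pow[of d k]] by simp

lemma omega_pow_d: "d > 0 \<Longrightarrow> omega d ^ d = -1"
  unfolding omega_pow by simp

lemma zeta_pow_d: "d > 0 \<Longrightarrow> zeta d ^ d = 1"
  unfolding zeta_pow by simp

lemma zeta_pow_ne_1:
  assumes "0 < k" "k < d"
  shows "zeta d ^ k \<noteq> 1"
proof
  assume "zeta d ^ k = 1"
  hence "cos (2 * pi * real k / real d) = 1"
    unfolding zeta_pow by (metis cis.sel(1) one_complex.sel(1) mult.commute mult.assoc)
  then obtain n :: int where n: "2 * pi * real k / real d = real_of_int n * 2 * pi"
    unfolding cos_one_2pi_int by blast
  have "real k / real d = real_of_int n"
    using n assms pi_gt_zero by (simp add: field_simps)
  moreover have "0 < real k / real d" "real k / real d < 1"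
    using assms by auto
  ultimately show False by simp
qed

lemma zeta_pow_mod: "d > 0 \<Longrightarrow> zeta d ^ k = zeta d ^ (k mod d)"
  by (metis div_mult_mod_eq mult.commute mult_1 power_add power_mult power_one zeta_pow_d)

lemma zeta_shift:
  assumes "d > 0"
  shows "(zeta d ^ (Suc x mod d)) ^ y = (zeta d ^ x) ^ y * zeta d ^ y"
proof -
  have "zeta d ^ (Suc x mod d) = zeta d ^ Suc x"
    using assms by (rule zeta_pow_mod[symmetric])
  thus ?thesis
    by (simp add: power_mult_distrib)
qed

text \<open>Sums of nontrivial d-th roots of unity over a full period vanish; for d > 2 this is applied
  to \<zeta> and \<zeta>^2.\<close>
lemma zeta_pow_geometric_sum:
  assumes "0 < k" "k < d"
  shows "(\<Sum>c<d. (zeta d ^ k) ^ c) = 0"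
proof -
  have "(zeta d ^ k) ^ d = (zeta d ^ d) ^ k"
    by (simp flip: power_mult add: mult.commute)
  also have "\<dots> = 1"
    using assms zeta_pow_d by simp
  finally show ?thesis
    using geometric_sum[OF zeta_pow_ne_1[OF assms]] by simp
qed

lemma cnj_zeta_pow:
  assumes "b \<le> d" "d > 0"
  shows "cnj (zeta d ^ b) = zeta d ^ (d - b)"
proof -
  have "zeta d ^ b * zeta d ^ (d - b) = 1"
    using assms zeta_pow_d by (simp flip: power_add)
  moreover have "zeta d ^ b * cnj (zeta d ^ b) = 1"
    by (rule unit_mult_cnj) simp
  ultimately show ?thesis
    by (metis mult.left_commute mult_1_right)
qed

lemma zeta_character_sum:
  assumes "a < d" "b < d"
  shows "(\<Sum>c<d. (zeta d ^ a * cnj (zeta d ^ b)) ^ c) = (if a = b then of_nat d else 0)"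
proof (cases "a = b")
  case True
  have "zeta d ^ a * cnj (zeta d ^ a) = 1"
    by (rule unit_mult_cnj) simp
  then show ?thesis
    using True by simp
next
  case False
  have "zeta d ^ a * cnj (zeta d ^ b) = zeta d ^ (a + (d - b))"
    using assms by (subst cnj_zeta_pow) (simp_all flip: power_add)
  also have "\<dots> = zeta d ^ ((a + (d - b)) mod d)"
    using assms by (intro zeta_pow_mod) simp
  finally have "zeta d ^ a * cnj (zeta d ^ b) = zeta d ^ ((a + (d - b)) mod d)" .
  moreover have "0 < (a + (d - b)) mod d"
    using assms False by (auto simp: mod_if)
  ultimately show ?thesis
    using False zeta_pow_geometric_sum[of "(a + (d - b)) mod d" d] assms by simp
qed

lemma div_mod_pair [simp]:
  assumes "b < (d::nat)"
  shows "(a * d + b) div d = a" "(a * d + b) mod d = b"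
  using assms by auto

lemma pair_index_less: "a < m \<Longrightarrow> b < d \<Longrightarrow> a * d + b < m * (d::nat)"
proof -
  assume "a < m" "b < d"
  hence "a * d + b < (a + 1) * d" by simp
  also have "\<dots> \<le> m * d" using \<open>a < m\<close> by (intro mult_le_mono1) simp
  finally show ?thesis .
qed

lemma div_less_of_mult: "a < n * d \<Longrightarrow> a div d < (n::nat)"
  by (simp add: less_mult_imp_div_less)

lemma sum_pair_index: "(\<Sum>i<m * d. f i) = (\<Sum>a<m. \<Sum>b<(d::nat). f (a * d + b))"
proof -
  have "(\<Sum>i<m * d. f i) = (\<Sum>a<m. \<Sum>i\<in>{a * d..<a * d + d}. f i)"
    by (rule sum.nat_group[symmetric])
  also have "\<dots> = (\<Sum>a<m. \<Sum>b<d. f (a * d + b))"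
  proof (rule sum.cong[OF refl])
    fix a
    show "(\<Sum>i\<in>{a * d..<a * d + d}. f i) = (\<Sum>b<d. f (a * d + b))"
      using sum.shift_bounds_nat_ivl[of f 0 "a * d" d]
      by (simp add: add.commute atLeast0LessThan)
  qed
  finally show ?thesis .
qed

lemma block_sum:
  assumes "a < m"
  shows "(\<Sum>i<m * d. if i div d = a then f i else 0) = (\<Sum>b<(d::nat). f (a * d + b))"
proof -
  have "(\<Sum>i<m * d. if i div d = a then f i else 0) =
      (\<Sum>a'<m. if a' = a then (\<Sum>b<d. f (a * d + b)) else 0)"
    unfolding sum_pair_index by (intro sum.cong refl) auto
  also have "\<dots> = (\<Sum>b<d. f (a * d + b))"
    using assms by simp
  finally show ?thesis .
qed

lemma sum_rotate:
  assumes "d > 0"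
  shows "(\<Sum>a<d. f (Suc a mod d)) = (\<Sum>a<d. f a :: 'a :: comm_monoid_add)"
proof -
  obtain m where m: "d = Suc m"
    using assms by (cases d) auto
  have "(\<Sum>a<Suc m. f (Suc a mod Suc m)) = (\<Sum>a<m. f (Suc a mod Suc m)) + f 0"
    by simp
  also have "(\<Sum>a<m. f (Suc a mod Suc m)) = (\<Sum>a<m. f (Suc a))"
    by (intro sum.cong) auto
  also have "(\<Sum>a<m. f (Suc a)) + f 0 = (\<Sum>a<Suc m. f a)"
    unfolding sum.lessThan_Suc_shift by (simp add: add.commute)
  finally show ?thesis
    using m by simp
qed

section \<open>Matrices: adjoints, congruences, traces\<close>

lemma mat_adjoint_index [simp]:
  fixes A :: "complex mat"
  shows "i < dim_col A \<Longrightarrow> j < dim_row A \<Longrightarrow> mat_adjoint A $$ (i, j) = cnj (A $$ (j, i))"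
    "dim_row (mat_adjoint A) = dim_col A" "dim_col (mat_adjoint A) = dim_row A"
  unfolding mat_adjoint_def by (auto simp: mat_of_rows_def)

lemma mat_adjoint_carrier [simp]:
  "(A :: complex mat) \<in> carrier_mat n m \<Longrightarrow> mat_adjoint A \<in> carrier_mat m n"
  by (intro carrier_matI) (simp_all add: carrier_matD)

lemma mat_mult_index:
  assumes "A \<in> carrier_mat n n" "B \<in> carrier_mat n n" "i < n" "j < n"
  shows "(A * B) $$ (i, j) = (\<Sum>k<n. A $$ (i, k) * B $$ (k, j))"
  using assms by (simp add: scalar_prod_def lessThan_atLeast0)

lemma sandwich_index:
  assumes "A \<in> carrier_mat n n" "Y \<in> carrier_mat n n" "a < n" "b < n"
  shows "(A * Y * mat_adjoint A) $$ (a, b) = (\<Sum>q<n. (\<Sum>p<n. A $$ (a, p) * Y $$ (p, q)) * cnj (A $$ (b, q)))"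
  using assms by (simp add: scalar_prod_def lessThan_atLeast0)

lemma adjoint_sesquilinear:
  fixes B :: "complex mat"
  assumes "B \<in> carrier_mat n n" "v \<in> carrier_vec n" "w \<in> carrier_vec n"
  shows "conjugate v \<bullet> (B *\<^sub>v w) = conjugate (mat_adjoint B *\<^sub>v v) \<bullet> w"
proof -
  have "conjugate v \<bullet> (B *\<^sub>v w) = (\<Sum>i<n. \<Sum>k<n. cnj (v $ i) * B $$ (i, k) * w $ k)"
    using assms by (simp add: scalar_prod_def lessThan_atLeast0 sum_distrib_left mult.assoc)
  also have "\<dots> = (\<Sum>k<n. \<Sum>i<n. cnj (v $ i) * B $$ (i, k) * w $ k)"
    by (rule sum.swap)
  also have "\<dots> = conjugate (mat_adjoint B *\<^sub>v v) \<bullet> w"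
    using assms
    by (simp add: scalar_prod_def lessThan_atLeast0 sum_distrib_left sum_distrib_right cnj_sum ac_simps)
  finally show ?thesis .
qed

lemma psd_congruence:
  fixes B :: "complex mat"
  assumes X: "psd n X" and B: "B \<in> carrier_mat n n"
  shows "psd n (B * X * mat_adjoint B)"
  unfolding psd_def
proof (intro conjI ballI)
  have XC: "X \<in> carrier_mat n n"
    using X unfolding psd_def by simp
  show "B * X * mat_adjoint B \<in> carrier_mat n n"
    using B XC by (metis mat_adjoint_carrier mult_carrier_mat)
  fix v :: "complex vec"
  assume v: "v \<in> carrier_vec n"
  define u where "u = mat_adjoint B *\<^sub>v v"
  have u: "u \<in> carrier_vec n"
    using B v unfolding u_def by (metis mat_adjoint_carrier mult_mat_vec_carrier)
  have adj: "mat_adjoint B \<in> carrier_mat n n"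
    using B by simp
  have "(B * X * mat_adjoint B) *\<^sub>v v = (B * X) *\<^sub>v u"
    unfolding u_def using B XC adj v by (intro assoc_mult_mat_vec) auto
  also have "\<dots> = B *\<^sub>v (X *\<^sub>v u)"
    using B XC u by (rule assoc_mult_mat_vec)
  finally have "(B * X * mat_adjoint B) *\<^sub>v v = B *\<^sub>v (X *\<^sub>v u)" .
  hence "conjugate v \<bullet> ((B * X * mat_adjoint B) *\<^sub>v v) = conjugate u \<bullet> (X *\<^sub>v u)"
    using adjoint_sesquilinear[OF B v, of "X *\<^sub>v u"] XC u unfolding u_def by simp
  also have "0 \<le> \<dots>"
    using X u unfolding psd_def by blast
  finally show "0 \<le> conjugate v \<bullet> ((B * X * mat_adjoint B) *\<^sub>v v)" .
qed

lemma psd_entrywise_sum: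
  assumes J: "finite J" and psd: "\<And>j. j \<in> J \<Longrightarrow> psd n (M j)"
    and S: "S \<in> carrier_mat n n"
    and entries: "\<And>a b. a < n \<Longrightarrow> b < n \<Longrightarrow> S $$ (a, b) = (\<Sum>j\<in>J. M j $$ (a, b))"
  shows "psd n S"
  unfolding psd_def
proof (intro conjI ballI)
  show "S \<in> carrier_mat n n" by (rule S)
  fix v :: "complex vec"
  assume v: "v \<in> carrier_vec n"
  have MC: "dim_row (M j) = n" "dim_col (M j) = n" if "j \<in> J" for j
    using psd[OF that] unfolding psd_def by auto
  have "conjugate v \<bullet> (S *\<^sub>v v) = (\<Sum>a<n. \<Sum>b<n. \<Sum>j\<in>J. cnj (v $ a) * M j $$ (a, b) * v $ b)"
    using S v by (simp add: scalar_prod_def lessThan_atLeast0 entries sum_distrib_left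
        sum_distrib_right mult.assoc)
  also have "\<dots> = (\<Sum>j\<in>J. \<Sum>a<n. \<Sum>b<n. cnj (v $ a) * M j $$ (a, b) * v $ b)"
    by (simp only: sum.swap[where A = J])
  also have "\<dots> = (\<Sum>j\<in>J. conjugate v \<bullet> (M j *\<^sub>v v))"
    using MC v by (intro sum.cong refl)
      (simp add: scalar_prod_def lessThan_atLeast0 sum_distrib_left mult.assoc)
  also have "0 \<le> \<dots>"
    using psd v unfolding psd_def by (intro sum_nonneg) blast
  finally show "0 \<le> conjugate v \<bullet> (S *\<^sub>v v)" .
qed

lemma mtrace_comm:
  assumes "A \<in> carrier_mat n n" "B \<in> carrier_mat n n"
  shows "mtrace (A * B) = mtrace (B * A)"
proof -
  have "mtrace (A * B) = (\<Sum>i<n. \<Sum>k<n. A $$ (i, k) * B $$ (k, i))"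
    unfolding mtrace_def using assms by (simp add: scalar_prod_def lessThan_atLeast0)
  also have "\<dots> = (\<Sum>k<n. \<Sum>i<n. B $$ (k, i) * A $$ (i, k))"
    by (subst sum.swap) (simp add: mult.commute)
  also have "\<dots> = mtrace (B * A)"
    unfolding mtrace_def using assms by (simp add: scalar_prod_def lessThan_atLeast0)
  finally show ?thesis .
qed

lemma mtrace_similar_pow:
  assumes "similar_mat_wit A B P Q"
  shows "mtrace (A ^\<^sub>m k) = mtrace (B ^\<^sub>m k)"
proof -
  define n where "n = dim_row A"
  note wit = similar_mat_witD[OF n_def assms]
  have Bk: "B ^\<^sub>m k \<in> carrier_mat n n"
    using wit by simp
  have "mtrace (A ^\<^sub>m k) = mtrace (P * B ^\<^sub>m k * Q)"
    using similar_mat_wit_pow_id[OF assms] by simp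
  also have "\<dots> = mtrace (Q * (P * B ^\<^sub>m k))"
    using wit Bk by (intro mtrace_comm[of _ n]) auto
  also have "Q * (P * B ^\<^sub>m k) = (Q * P) * B ^\<^sub>m k"
    using wit Bk by (intro assoc_mult_mat[symmetric]) auto
  also have "\<dots> = B ^\<^sub>m k"
    using wit Bk by simp
  finally show ?thesis .
qed

lemma mtrace_mat_diag_pow: "mtrace (mat_diag n f ^\<^sub>m k) = (\<Sum>i<n. f i ^ k)"
proof -
  have "mat_diag n f ^\<^sub>m k = mat_diag n (\<lambda>i. f i ^ k)"
  proof (induction k)
    case 0
    show ?case
      by (rule eq_matI) (auto simp: mat_diag_def)
  next
    case (Suc k)
    then show ?case
      by (simp add: mult.commute)
  qed
  thus ?thesis
    by (simp add: mtrace_def mat_diag_def)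
qed

lemma pow_mat_2: "A \<in> carrier_mat n n \<Longrightarrow> A ^\<^sub>m 2 = A * A"
  by (simp add: numeral_2_eq_2)

lemma proots_linear_factors: "proots (\<Prod>a\<leftarrow>xs. [:- a, 1:]) = mset (xs :: 'a :: idom list)"
proof (induction xs)
  case (Cons a xs)
  have "(\<Prod>a\<leftarrow>xs. [:- a, 1:]) \<noteq> 0"
    by (auto simp: prod_list_zero_iff)
  hence "proots ([:- a, 1:] * (\<Prod>a\<leftarrow>xs. [:- a, 1:])) =
      proots [:- a, 1:] + proots (\<Prod>a\<leftarrow>xs. [:- a, 1:])"
    by (intro proots_mult) simp_all
  with Cons.IH show ?case
    by simp
qed simp

section \<open>Kraus maps are completely positive\<close>

definition kraus_map :: "nat \<Rightarrow> 'j set \<Rightarrow> ('j \<Rightarrow> complex mat) \<Rightarrow> complex mat \<Rightarrow> complex mat" where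
  "kraus_map d J K \<rho> = mat d d (\<lambda>ab. \<Sum>j\<in>J. (K j * \<rho> * mat_adjoint (K j)) $$ ab)"

text \<open>The matrix of id_n \<otimes> K on C^n \<otimes> C^d: n copies of K along the diagonal.\<close>
definition block_diag :: "nat \<Rightarrow> nat \<Rightarrow> complex mat \<Rightarrow> complex mat" where
  "block_diag n d K = mat (n * d) (n * d)
     (\<lambda>(a, b). if a div d = b div d then K $$ (a mod d, b mod d) else 0)"

lemma block_diag_carrier [simp]: "block_diag n d K \<in> carrier_mat (n * d) (n * d)"
  unfolding block_diag_def by simp

lemma block_diag_index:
  "a < n * d \<Longrightarrow> i < n * d \<Longrightarrow>
    block_diag n d K $$ (a, i) = (if i div d = a div d then K $$ (a mod d, i mod d) else 0)"
  unfolding block_diag_def by auto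

lemma ampliation_sandwich:
  assumes K: "K \<in> carrier_mat d d" and X: "X \<in> carrier_mat (n * d) (n * d)"
  shows "ampliation n d (\<lambda>Y. K * Y * mat_adjoint K) X =
    block_diag n d K * X * mat_adjoint (block_diag n d K)"
proof (rule eq_matI)
  fix a b
  assume "a < dim_row (block_diag n d K * X * mat_adjoint (block_diag n d K))"
    and "b < dim_col (block_diag n d K * X * mat_adjoint (block_diag n d K))"
  hence a: "a < n * d" and b: "b < n * d"
    by (simp_all add: block_diag_def)
  hence d: "0 < d"
    by (cases d) simp_all
  define Y where "Y = mat d d (\<lambda>(p, q). X $$ (a div d * d + p, b div d * d + q))"
  have Y: "Y \<in> carrier_mat d d"
    unfolding Y_def by simp
  have "(block_diag n d K * X * mat_adjoint (block_diag n d K)) $$ (a, b) =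
      (\<Sum>q<d. (\<Sum>p<d. K $$ (a mod d, p) * X $$ (a div d * d + p, b div d * d + q))
         * cnj (K $$ (b mod d, q)))"
  proof -
    have row: "(\<Sum>i<n * d. block_diag n d K $$ (a, i) * X $$ (i, j)) =
        (\<Sum>p<d. K $$ (a mod d, p) * X $$ (a div d * d + p, j))" for j
      using a by (simp add: block_diag_index if_distrib[of "\<lambda>x. x * _"] block_sum div_less_of_mult
          cong: if_cong)
    have "(block_diag n d K * X * mat_adjoint (block_diag n d K)) $$ (a, b) =
        (\<Sum>j<n * d. (\<Sum>i<n * d. block_diag n d K $$ (a, i) * X $$ (i, j))
           * cnj (block_diag n d K $$ (b, j)))"
      by (rule sandwich_index[OF block_diag_carrier X a b])
    also have "\<dots> = (\<Sum>j<n * d. if j div d = b div d then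
           (\<Sum>p<d. K $$ (a mod d, p) * X $$ (a div d * d + p, j)) * cnj (K $$ (b mod d, j mod d))
         else 0)"
      by (rule sum.cong[OF refl]) (use b in \<open>simp add: row block_diag_index\<close>)
    also have "\<dots> = (\<Sum>q<d. (\<Sum>p<d. K $$ (a mod d, p) * X $$ (a div d * d + p, b div d * d + q))
         * cnj (K $$ (b mod d, q)))"
      using b by (simp add: block_sum div_less_of_mult)
    finally show ?thesis .
  qed
  also have "\<dots> = (K * Y * mat_adjoint K) $$ (a mod d, b mod d)"
    using d by (subst sandwich_index[OF K Y]) (simp_all add: Y_def)
  also have "\<dots> = ampliation n d (\<lambda>Y. K * Y * mat_adjoint K) X $$ (a, b)"
    using a b unfolding ampliation_def Y_def by simp
  finally show "ampliation n d (\<lambda>Y. K * Y * mat_adjoint K) X $$ (a, b) =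
      (block_diag n d K * X * mat_adjoint (block_diag n d K)) $$ (a, b)" ..
qed (simp_all add: ampliation_def block_diag_def)

theorem kraus_map_completely_positive:
  assumes J: "finite J" and K: "\<And>j. j \<in> J \<Longrightarrow> K j \<in> carrier_mat d d"
  shows "completely_positive d (kraus_map d J K)"
  unfolding completely_positive_def
proof (intro allI impI)
  fix n X
  assume X: "psd (n * d) X"
  hence XC: "X \<in> carrier_mat (n * d) (n * d)"
    unfolding psd_def by simp
  show "psd (n * d) (ampliation n d (kraus_map d J K) X)"
  proof (rule psd_entrywise_sum[OF J])
    fix j
    assume "j \<in> J"
    show "psd (n * d) (ampliation n d (\<lambda>Y. K j * Y * mat_adjoint (K j)) X)"
      unfolding ampliation_sandwich[OF K[OF \<open>j \<in> J\<close>] XC]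
      by (rule psd_congruence[OF X block_diag_carrier])
  next
    show "ampliation n d (kraus_map d J K) X \<in> carrier_mat (n * d) (n * d)"
      by (simp add: ampliation_def)
  next
    fix a b
    assume a: "a < n * d" and b: "b < n * d"
    hence "0 < d"
      by (cases d) simp_all
    with a b show "ampliation n d (kraus_map d J K) X $$ (a, b) =
        (\<Sum>j\<in>J. ampliation n d (\<lambda>Y. K j * Y * mat_adjoint (K j)) X $$ (a, b))"
      by (simp add: ampliation_def kraus_map_def)
  qed
qed

section \<open>The channel T\<close>

lemma exT_kraus_map: "exT d = kraus_map d {0..d} (kraus d)"
  by (intro ext) (simp add: exT_def kraus_map_def)

lemma kraus_carrier [simp]: "kraus d j \<in> carrier_mat d d"
  unfolding kraus_def ketbra_def by simp

corollary exT_completely_positive: "completely_positive d (exT d)"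
  unfolding exT_kraus_map by (rule kraus_map_completely_positive) simp_all

definition inv_sqrt2 :: complex where
  "inv_sqrt2 = complex_of_real (1 / sqrt 2)"

lemma inv_sqrt2_sq: "inv_sqrt2 * inv_sqrt2 = 1 / 2" "inv_sqrt2 * (inv_sqrt2 * z) = z / 2"
  unfolding inv_sqrt2_def by (simp_all flip: of_real_mult add: mult.assoc[symmetric])

lemma cnj_inv_sqrt2 [simp]: "cnj inv_sqrt2 = inv_sqrt2"
  unfolding inv_sqrt2_def by simp

lemma kraus_shift_index:
  "j < d \<Longrightarrow> a < d \<Longrightarrow> b < d \<Longrightarrow>
    kraus d j $$ (a, b) = (if a = j \<and> b = Suc j mod d then inv_sqrt2 else 0)"
  unfolding kraus_def ketbra_def inv_sqrt2_def by auto

lemma kraus_phase_index: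
  "a < d \<Longrightarrow> b < d \<Longrightarrow> kraus d d $$ (a, b) = (if a = b then inv_sqrt2 * omega d ^ a else 0)"
  unfolding kraus_def exp_eq_omega_pow inv_sqrt2_def by auto

lemma sandwich_shift:
  assumes "\<rho> \<in> carrier_mat d d" "a < d" "b < d" "j < d"
  shows "(kraus d j * \<rho> * mat_adjoint (kraus d j)) $$ (a, b) =
    (if a = j \<and> b = j then \<rho> $$ (Suc j mod d, Suc j mod d) / 2 else 0)"
  using assms unfolding sandwich_index[OF kraus_carrier assms(1-3)]
  by (cases "a = j"; cases "b = j")
    (simp_all add: kraus_shift_index if_distrib[of "\<lambda>x. x * _"]
     if_distrib[of "\<lambda>x. _ * x"] if_distrib[of cnj] inv_sqrt2_sq ac_simps cong: if_cong)

lemma sandwich_phase: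
  assumes "\<rho> \<in> carrier_mat d d" "a < d" "b < d"
  shows "(kraus d d * \<rho> * mat_adjoint (kraus d d)) $$ (a, b) =
    omega d ^ a * cnj (omega d ^ b) * \<rho> $$ (a, b) / 2"
  using assms unfolding sandwich_index[OF kraus_carrier assms(1-3)]
  by (simp add: kraus_phase_index if_distrib[of "\<lambda>x. x * _"]
     if_distrib[of "\<lambda>x. _ * x"] if_distrib[of cnj] inv_sqrt2_sq ac_simps cong: if_cong)

lemma exT_dim [simp]: "dim_row (exT d \<rho>) = d" "dim_col (exT d \<rho>) = d"
  unfolding exT_def by simp_all

lemma exT_index:
  assumes "\<rho> \<in> carrier_mat d d" "a < d" "b < d"
  shows "exT d \<rho> $$ (a, b) = (if a = b then \<rho> $$ (Suc a mod d, Suc a mod d) / 2 else 0)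
    + omega d ^ a * cnj (omega d ^ b) * \<rho> $$ (a, b) / 2"
proof -
  have "{0..d} = insert d {..<d}"
    by auto
  hence "exT d \<rho> $$ (a, b) = (\<Sum>j<d. (kraus d j * \<rho> * mat_adjoint (kraus d j)) $$ (a, b))
      + (kraus d d * \<rho> * mat_adjoint (kraus d d)) $$ (a, b)"
    using assms by (simp add: exT_def)
  also have "(\<Sum>j<d. (kraus d j * \<rho> * mat_adjoint (kraus d j)) $$ (a, b)) =
      (\<Sum>j<d. if a = j \<and> b = j then \<rho> $$ (Suc j mod d, Suc j mod d) / 2 else 0)"
    using assms by (intro sum.cong refl) (simp add: sandwich_shift)
  also have "\<dots> = (if a = b then \<rho> $$ (Suc a mod d, Suc a mod d) / 2 else 0)"
    using assms by (cases "a = b") (auto intro: sum.neutral)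
  finally show ?thesis
    using assms by (simp add: sandwich_phase)
qed

lemma exT_trace_preserving:
  assumes "d > 0"
  shows "trace_preserving d (exT d)"
  unfolding trace_preserving_def
proof
  fix X :: "complex mat"
  assume X: "X \<in> carrier_mat d d"
  have rotate: "(\<Sum>a<d. X $$ (Suc a mod d, Suc a mod d)) = (\<Sum>a<d. X $$ (a, a))"
    using assms by (rule sum_rotate)
  have "mtrace (exT d X) = (\<Sum>a<d. X $$ (Suc a mod d, Suc a mod d) / 2 + X $$ (a, a) / 2)"
    unfolding mtrace_def using X by (intro sum.cong) (simp_all add: exT_index)
  also have "\<dots> = mtrace X"
    using X by (simp add: mtrace_def sum.distrib rotate flip: sum_divide_distrib)
  finally show "mtrace (exT d X) = mtrace X" .
qed

lemma exT_unital: "unital d (exT d)"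
  unfolding unital_def by (rule eq_matI) (auto simp: exT_index)

section \<open>Diagonalising the matrix representation\<close>

definition diag_index :: "nat \<Rightarrow> nat \<Rightarrow> nat" where
  "diag_index d x = x * d + x"

definition is_diag_index :: "nat \<Rightarrow> nat \<Rightarrow> bool" where
  "is_diag_index d i \<longleftrightarrow> i div d = i mod d"

lemma index_bounds: "i < d * d \<Longrightarrow> i div d < d" "i < d * d \<Longrightarrow> i mod d < (d::nat)"
  by (simp_all add: div_less_of_mult) (metis mod_less_divisor mult_0_right neq0_conv not_less0)

lemma index_eq_iff: "(i::nat) = k \<longleftrightarrow> i div d = k div d \<and> i mod d = k mod d"
  by (metis div_mult_mod_eq)

lemma diag_index_props [simp]:
  assumes "x < d"
  shows "diag_index d x < d * d" "is_diag_index d (diag_index d x)"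
    "diag_index d x div d = x" "diag_index d x mod d = x"
  using assms pair_index_less[OF assms assms] unfolding diag_index_def is_diag_index_def by simp_all

lemma diag_index_eq_iff: "x < d \<Longrightarrow> k = diag_index d x \<longleftrightarrow> k div d = x \<and> k mod d = x"
  unfolding diag_index_def by (metis div_mult_mod_eq div_mod_pair)

lemma sum_diag_indices: "(\<Sum>k<d * d. if is_diag_index d k then g (k mod d) else 0) = (\<Sum>x<d. g x)"
  unfolding sum_pair_index is_diag_index_def by (simp cong: if_cong)

definition lift_diag :: "nat \<Rightarrow> complex mat \<Rightarrow> complex mat" where
  "lift_diag d A = mat (d * d) (d * d) (\<lambda>(i, j).
     if is_diag_index d i \<and> is_diag_index d j then A $$ (i mod d, j mod d)
     else if i = j then 1 else 0)"

lemma lift_diag_carrier [simp]: "lift_diag d A \<in> carrier_mat (d * d) (d * d)"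
  unfolding lift_diag_def by simp

lemma lift_diag_one: "lift_diag d (1\<^sub>m d) = 1\<^sub>m (d * d)"
  by (rule eq_matI)
    (auto simp: lift_diag_def is_diag_index_def index_bounds, metis div_mult_mod_eq)

lemma lift_diag_mult:
  assumes A: "A \<in> carrier_mat d d" and B: "B \<in> carrier_mat d d"
  shows "lift_diag d A * lift_diag d B = lift_diag d (A * B)"
proof (rule eq_matI)
  fix i j
  assume "i < dim_row (lift_diag d (A * B))" "j < dim_col (lift_diag d (A * B))"
  hence i: "i < d * d" and j: "j < d * d"
    by (simp_all add: lift_diag_def)
  have "(lift_diag d A * lift_diag d B) $$ (i, j) =
      (\<Sum>k<d * d. lift_diag d A $$ (i, k) * lift_diag d B $$ (k, j))"
    by (rule mat_mult_index[OF lift_diag_carrier lift_diag_carrier i j])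
  also have "\<dots> = lift_diag d (A * B) $$ (i, j)"
  proof (cases "is_diag_index d i")
    case False
    hence "(\<Sum>k<d * d. lift_diag d A $$ (i, k) * lift_diag d B $$ (k, j)) =
        (\<Sum>k<d * d. if k = i then lift_diag d B $$ (i, j) else 0)"
      using i by (intro sum.cong refl) (auto simp: lift_diag_def)
    thus ?thesis
      using False i j by (simp add: lift_diag_def)
  next
    case diag_i: True
    show ?thesis
    proof (cases "is_diag_index d j")
      case False
      hence "(\<Sum>k<d * d. lift_diag d A $$ (i, k) * lift_diag d B $$ (k, j)) =
          (\<Sum>k<d * d. if k = j then lift_diag d A $$ (i, j) else 0)"
        using j by (intro sum.cong refl) (auto simp: lift_diag_def)
      thus ?thesis
        using False diag_i i j by (auto simp: lift_diag_def)
    next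
      case True
      have "(\<Sum>k<d * d. lift_diag d A $$ (i, k) * lift_diag d B $$ (k, j)) =
          (\<Sum>k<d * d. if is_diag_index d k then A $$ (i mod d, k mod d) * B $$ (k mod d, j mod d) else 0)"
        using diag_i True i j by (intro sum.cong refl) (auto simp: lift_diag_def)
      also have "\<dots> = (A * B) $$ (i mod d, j mod d)"
        unfolding sum_diag_indices[of d "\<lambda>x. A $$ (i mod d, x) * B $$ (x, j mod d)"] using A B i j
        by (simp add: scalar_prod_def lessThan_atLeast0 index_bounds)
      finally show ?thesis
        using diag_i True i j by (simp add: lift_diag_def)
    qed
  qed
  finally show "(lift_diag d A * lift_diag d B) $$ (i, j) = lift_diag d (A * B) $$ (i, j)" .
qed (simp_all add: lift_diag_def)

definition dft :: "nat \<Rightarrow> complex mat" where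
  "dft d = mat d d (\<lambda>(x, y). (zeta d ^ x) ^ y)"

definition dft_inv :: "nat \<Rightarrow> complex mat" where
  "dft_inv d = mat d d (\<lambda>(y, z). cnj ((zeta d ^ z) ^ y) / of_nat d)"

lemma dft_carrier: "dft d \<in> carrier_mat d d"
  unfolding dft_def by simp

lemma dft_inv_carrier: "dft_inv d \<in> carrier_mat d d"
  unfolding dft_inv_def by simp

lemma dft_inverse: "dft d * dft_inv d = 1\<^sub>m d"
proof (rule eq_matI)
  fix x z
  assume "x < dim_row (1\<^sub>m d)" "z < dim_col (1\<^sub>m d)"
  hence x: "x < d" and z: "z < d"
    by simp_all
  have "(dft d * dft_inv d) $$ (x, z) = (\<Sum>y<d. (zeta d ^ x * cnj (zeta d ^ z)) ^ y) / of_nat d"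
    using x z by (simp add: dft_def dft_inv_def scalar_prod_def lessThan_atLeast0 sum_divide_distrib
        power_mult_distrib)
  also have "\<dots> = 1\<^sub>m d $$ (x, z)"
    using x z by (subst zeta_character_sum[OF x z]) simp
  finally show "(dft d * dft_inv d) $$ (x, z) = 1\<^sub>m d $$ (x, z)" .
qed (simp_all add: dft_def dft_inv_def)

definition fourier :: "nat \<Rightarrow> complex mat" where
  "fourier d = lift_diag d (dft d)"

definition fourier_inv :: "nat \<Rightarrow> complex mat" where
  "fourier_inv d = lift_diag d (dft_inv d)"

lemma fourier_carrier [simp]:
  "fourier d \<in> carrier_mat (d * d) (d * d)" "fourier_inv d \<in> carrier_mat (d * d) (d * d)"
  unfolding fourier_def fourier_inv_def by simp_all

lemma fourier_inverse:
  "fourier d * fourier_inv d = 1\<^sub>m (d * d)" "fourier_inv d * fourier d = 1\<^sub>m (d * d)"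
proof -
  show inv: "fourier d * fourier_inv d = 1\<^sub>m (d * d)"
    unfolding fourier_def fourier_inv_def lift_diag_mult[OF dft_carrier dft_inv_carrier] dft_inverse
    by (rule lift_diag_one)
  show "fourier_inv d * fourier d = 1\<^sub>m (d * d)"
    by (rule mat_mult_left_right_inverse[OF _ _ inv]) simp_all
qed

text \<open>The eigenvalues of T: (1 + \<zeta>^x)/2 on the Fourier modes of the diagonal matrices, and
  \<omega>^a \<omega>^-b / 2 on the matrix unit |a><b| for a \<noteq> b.\<close>
definition eigval :: "nat \<Rightarrow> nat \<Rightarrow> complex" where
  "eigval d i = (if is_diag_index d i then (1 + zeta d ^ (i mod d)) / 2
     else omega d ^ (i div d) * cnj (omega d ^ (i mod d)) / 2)"

lemma mat_rep_carrier [simp]: "mat_rep d T \<in> carrier_mat (d * d) (d * d)"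
  unfolding mat_rep_def by simp

lemma mat_rep_exT_index:
  assumes d: "d > 0" and i: "i < d * d" and k: "k < d * d"
  shows "mat_rep d (exT d) $$ (i, k) =
    (if is_diag_index d i \<and> k = diag_index d (Suc (i mod d) mod d) then 1 / 2 else 0)
    + (if k = i then omega d ^ (i div d) * cnj (omega d ^ (i mod d)) / 2 else 0)"
proof -
  have b: "i div d < d" "i mod d < d" "k div d < d" "k mod d < d" "Suc (i mod d) mod d < d"
    using index_bounds i k d by auto
  have kb: "ketbra d (k div d) (k mod d) \<in> carrier_mat d d"
    unfolding ketbra_def by simp
  have "mat_rep d (exT d) $$ (i, k) = exT d (ketbra d (k div d) (k mod d)) $$ (i div d, i mod d)"
    unfolding mat_rep_def using i k by simp
  also have "\<dots> = (if i div d = i mod d then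
        ketbra d (k div d) (k mod d) $$ (Suc (i div d) mod d, Suc (i div d) mod d) / 2 else 0)
      + omega d ^ (i div d) * cnj (omega d ^ (i mod d)) * ketbra d (k div d) (k mod d) $$ (i div d, i mod d) / 2"
    by (rule exT_index[OF kb b(1,2)])
  also have "ketbra d (k div d) (k mod d) $$ (i div d, i mod d) = (if k = i then 1 else 0)"
    unfolding ketbra_def using b index_eq_iff[of i k d] by auto
  also have "(if i div d = i mod d then
        ketbra d (k div d) (k mod d) $$ (Suc (i div d) mod d, Suc (i div d) mod d) / 2 else 0)
      = (if is_diag_index d i \<and> k = diag_index d (Suc (i mod d) mod d) then 1 / 2 else 0)"
    unfolding ketbra_def is_diag_index_def using b diag_index_eq_iff[OF b(5), of k] by auto
  finally show ?thesis
    by simp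
qed

lemma fourier_index:
  assumes "i < d * d" "j < d * d"
  shows "fourier d $$ (i, j) = (if is_diag_index d i \<and> is_diag_index d j
    then (zeta d ^ (i mod d)) ^ (j mod d) else if i = j then 1 else 0)"
  using assms index_bounds unfolding fourier_def lift_diag_def dft_def by simp

lemma mat_rep_fourier_index:
  assumes d: "d > 0" and i: "i < d * d" and j: "j < d * d"
  shows "(mat_rep d (exT d) * fourier d) $$ (i, j) =
    (if is_diag_index d i then fourier d $$ (diag_index d (Suc (i mod d) mod d), j) / 2 else 0)
    + omega d ^ (i div d) * cnj (omega d) ^ (i mod d) / 2 * fourier d $$ (i, j)"
proof -
  have "(mat_rep d (exT d) * fourier d) $$ (i, j) =
      (\<Sum>k<d * d. mat_rep d (exT d) $$ (i, k) * fourier d $$ (k, j))"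
    by (rule mat_mult_index[OF mat_rep_carrier fourier_carrier(1) i j])
  also have "\<dots> = (if is_diag_index d i then fourier d $$ (diag_index d (Suc (i mod d) mod d), j) / 2 else 0)
      + omega d ^ (i div d) * cnj (omega d) ^ (i mod d) / 2 * fourier d $$ (i, j)"
    using d i by (simp add: mat_rep_exT_index distrib_right sum.distrib if_distrib[of "\<lambda>x. x * _"]
        cong: if_cong)
  finally show ?thesis .
qed

lemma mat_rep_fourier:
  assumes d: "d > 0"
  shows "mat_rep d (exT d) * fourier d = fourier d * mat_diag (d * d) (eigval d)"
proof (rule eq_matI)
  fix i j
  assume "i < dim_row (fourier d * mat_diag (d * d) (eigval d))"
    "j < dim_col (fourier d * mat_diag (d * d) (eigval d))"
  hence i: "i < d * d" and j: "j < d * d"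
    by (simp_all add: fourier_def lift_diag_def mat_diag_def)
  define n where "n = diag_index d (Suc (i mod d) mod d)"
  define e where "e = omega d ^ (i div d) * cnj (omega d) ^ (i mod d)"
  have n: "n < d * d" "is_diag_index d n" "n mod d = Suc (i mod d) mod d"
    unfolding n_def using d by simp_all
  have "(mat_rep d (exT d) * fourier d) $$ (i, j) =
      (if is_diag_index d i then fourier d $$ (n, j) / 2 else 0) + e / 2 * fourier d $$ (i, j)"
    unfolding mat_rep_fourier_index[OF d i j] n_def e_def ..
  also have "\<dots> = fourier d $$ (i, j) * eigval d j"
  proof (cases "is_diag_index d i")
    case False
    then show ?thesis
      using i j by (auto simp: fourier_index eigval_def e_def)
  next
    case diag_i: True
    show ?thesis
    proof (cases "is_diag_index d j")
      case False
      hence "n \<noteq> j" "i \<noteq> j"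
        using n diag_i by auto
      then show ?thesis
        using False diag_i i j n by (simp add: fourier_index)
    next
      case True
      have "e = 1"
        using diag_i unfolding e_def is_diag_index_def by simp
      moreover have "fourier d $$ (n, j) = (zeta d ^ (i mod d)) ^ (j mod d) * zeta d ^ (j mod d)"
        using True n j d by (simp add: fourier_index zeta_shift)
      ultimately show ?thesis
        using True diag_i i j by (simp add: fourier_index eigval_def algebra_simps)
    qed
  qed
  also have "\<dots> = (fourier d * mat_diag (d * d) (eigval d)) $$ (i, j)"
    using i j by (simp add: mat_diag_mult_right[of _ "d * d"])
  finally show "(mat_rep d (exT d) * fourier d) $$ (i, j) =
      (fourier d * mat_diag (d * d) (eigval d)) $$ (i, j)" .
qed (simp_all add: fourier_def lift_diag_def mat_diag_def mat_rep_def)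

lemma mat_rep_similar_wit:
  assumes d: "d > 0"
  shows "similar_mat_wit (mat_rep d (exT d)) (mat_diag (d * d) (eigval d)) (fourier d) (fourier_inv d)"
proof (rule similar_mat_witI[OF fourier_inverse])
  let ?R = "mat_rep d (exT d)" and ?L = "mat_diag (d * d) (eigval d)"
  have "?R = ?R * (fourier d * fourier_inv d)"
    by (simp add: fourier_inverse right_mult_one_mat[OF mat_rep_carrier])
  also have "\<dots> = ?R * fourier d * fourier_inv d"
    by (rule assoc_mult_mat[symmetric, OF mat_rep_carrier fourier_carrier])
  also have "\<dots> = fourier d * ?L * fourier_inv d"
    by (simp add: mat_rep_fourier[OF d])
  finally show "?R = fourier d * ?L * fourier_inv d" .
qed simp_all

lemma map_spectrum_exT:
  assumes "d > 0"
  shows "map_spectrum d (exT d) = mset (map (eigval d) [0..<d * d])"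
proof -
  have "char_poly (mat_rep d (exT d)) = char_poly (mat_diag (d * d) (eigval d))"
    using mat_rep_similar_wit[OF assms] by (intro char_poly_similar) (auto simp: similar_mat_def)
  also have "\<dots> = (\<Prod>a\<leftarrow>diag_mat (mat_diag (d * d) (eigval d)). [:- a, 1:])"
    by (rule char_poly_upper_triangular[OF mat_diag_dim]) (simp add: upper_triangular_def mat_diag_def)
  also have "diag_mat (mat_diag (d * d) (eigval d)) = map (eigval d) [0..<d * d]"
    by (simp add: diag_mat_def mat_diag_def)
  finally have "char_poly (mat_rep d (exT d)) = (\<Prod>a\<leftarrow>map (eigval d) [0..<d * d]. [:- a, 1:])" .
  thus ?thesis
    unfolding map_spectrum_def by (simp only: proots_linear_factors)
qed

lemma trace_mat_rep_exT_pow: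
  assumes "d > 0"
  shows "mtrace (mat_rep d (exT d) ^\<^sub>m k) = (\<Sum>i<d * d. eigval d i ^ k)"
  unfolding mtrace_similar_pow[OF mat_rep_similar_wit[OF assms]] by (rule mtrace_mat_diag_pow)

section \<open>Spectral radius and primitivity\<close>

lemma unit_norm_one_plus_eq_2:
  assumes "cmod w = 1" "cmod (1 + w) = 2"
  shows "w = 1"
proof -
  have e1: "Re w ^ 2 + Im w ^ 2 = 1"
    using assms(1) cmod_power2[of w] by simp
  have "(1 + Re w) ^ 2 + Im w ^ 2 = 4"
    using assms(2) cmod_power2[of "1 + w"] by simp
  hence "Re w = 1"
    using e1 by (simp add: power2_sum)
  with e1 have "Im w = 0"
    by simp
  with \<open>Re w = 1\<close> show ?thesis
    by (simp add: complex_eq_iff)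
qed

lemma eigval_norm_le: "cmod (eigval d i) \<le> 1"
proof (cases "is_diag_index d i")
  case True
  have "cmod (1 + zeta d ^ (i mod d)) \<le> 2"
    using norm_triangle_ineq[of 1 "zeta d ^ (i mod d)"] by simp
  then show ?thesis
    using True by (simp add: eigval_def norm_divide)
qed (simp add: eigval_def norm_divide norm_mult norm_power)

lemma eigval_norm_eq_1_iff:
  assumes d: "d > 0" and i: "i < d * d"
  shows "cmod (eigval d i) = 1 \<longleftrightarrow> i = 0"
proof (cases "is_diag_index d i")
  case True
  define w where "w = zeta d ^ (i mod d)"
  have eig: "eigval d i = (1 + w) / 2"
    using True unfolding eigval_def w_def by simp
  have "cmod (eigval d i) = 1 \<longleftrightarrow> w = 1"
    using unit_norm_one_plus_eq_2[of w] unfolding eig w_def by (auto simp: norm_divide)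
  also have "\<dots> \<longleftrightarrow> i mod d = 0"
    using zeta_pow_ne_1[of "i mod d" d] index_bounds(2)[OF i] unfolding w_def by auto
  also have "\<dots> \<longleftrightarrow> i = 0"
    using True unfolding is_diag_index_def by (metis div_mult_mod_eq mult_0 add_0 div_0 mod_0)
  finally show ?thesis .
next
  case False
  hence "i \<noteq> 0"
    unfolding is_diag_index_def by (cases i) auto
  with False show ?thesis
    by (simp add: eigval_def norm_divide norm_mult norm_power)
qed

lemma eigval_0: "d > 0 \<Longrightarrow> eigval d 0 = 1"
  unfolding eigval_def is_diag_index_def by simp

lemma spectral_radius_exT:
  assumes d: "d > 0"
  shows "spectral_radius (mat_rep d (exT d)) = 1"
proof -
  have "char_poly (mat_rep d (exT d)) \<noteq> 0"
    using degree_monic_char_poly[OF mat_rep_carrier] by (metis coeff_0 zero_neq_one)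
  hence "spectrum (mat_rep d (exT d)) = set_mset (map_spectrum d (exT d))"
    unfolding spectrum_root_char_poly[OF mat_rep_carrier] map_spectrum_def by simp
  also have "\<dots> = eigval d ` {..<d * d}"
    unfolding map_spectrum_exT[OF d] by auto
  finally have "spectrum (mat_rep d (exT d)) = eigval d ` {..<d * d}" .
  moreover have "Max (norm ` eigval d ` {..<d * d}) = 1"
  proof (rule Max_eqI)
    show "1 \<in> norm ` eigval d ` {..<d * d}"
      using d eigval_0[OF d] by (intro image_eqI[of _ _ "eigval d 0"]) auto
  qed (auto simp: eigval_norm_le)
  ultimately show ?thesis
    unfolding spectral_radius_def by simp
qed

lemma pos_def_one: "pos_def d (1\<^sub>m d)"
  unfolding pos_def_def
proof (intro conjI ballI impI)
  fix v :: "complex vec"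
  assume v: "v \<in> carrier_vec d" and nz: "v \<noteq> 0\<^sub>v d"
  have "conjugate v \<bullet> (1\<^sub>m d *\<^sub>v v) = v \<bullet>c v"
    using v by (simp add: conjugate_vec_sprod_comm)
  moreover have "v \<bullet>c v \<ge> 0" "v \<bullet>c v \<noteq> 0"
    using conjugate_square_ge_0_vec[of v] conjugate_square_eq_0_vec[OF v] nz by auto
  ultimately show "0 < conjugate v \<bullet> (1\<^sub>m d *\<^sub>v v)"
    by simp
qed simp

lemma exT_primitive:
  assumes d: "d > 0"
  shows "primitive d (exT d)"
  unfolding primitive_def Let_def spectral_radius_exT[OF d] map_spectrum_exT[OF d]
proof (intro conjI)
  have eq_1: "eigval d i = 1 \<longleftrightarrow> i = 0" if "i < d * d" for i
    using eigval_norm_eq_1_iff[OF d that] eigval_0[OF d] by auto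
  have "[0..<d * d] = 0 # [1..<d * d]"
    using d by (simp add: upt_conv_Cons)
  moreover have "1 \<notin> set (map (eigval d) [1..<d * d])"
    using eq_1 by auto
  ultimately show "count (mset (map (eigval d) [0..<d * d])) (complex_of_real 1) = 1"
    using eigval_0[OF d] by (simp add: count_eq_zero_iff)
  have "complex_of_real 1 \<cdot>\<^sub>m 1\<^sub>m d = 1\<^sub>m d"
    by (rule eq_matI) auto
  thus "\<exists>X. pos_def d X \<and> exT d X = complex_of_real 1 \<cdot>\<^sub>m X"
    using pos_def_one exT_unital unfolding unital_def by metis
  show "\<forall>z\<in>#mset (map (eigval d) [0..<d * d]). cmod z = 1 \<longrightarrow> z = complex_of_real 1"
    using eigval_norm_eq_1_iff[OF d] eigval_0[OF d] by auto
qed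

section \<open>The first two moments\<close>

lemma sum_rank_one_plus_diagonal:
  fixes f :: "nat \<Rightarrow> complex" and d :: nat
  assumes "\<And>a b. a < d \<Longrightarrow> b < d \<Longrightarrow> f (a * d + b) = c * (g a * cnj (g b)) + (if a = b then h a else 0)"
  shows "(\<Sum>i<d * d. f i) = c * ((\<Sum>a<d. g a) * cnj (\<Sum>a<d. g a)) + (\<Sum>a<d. h a)"
proof -
  have "(\<Sum>i<d * d. f i) = (\<Sum>a<d. \<Sum>b<d. f (a * d + b))"
    by (rule sum_pair_index)
  also have "\<dots> = (\<Sum>a<d. \<Sum>b<d. c * (g a * cnj (g b)) + (if a = b then h a else 0))"
    using assms by (intro sum.cong refl) auto
  also have "\<dots> = c * ((\<Sum>a<d. g a) * cnj (\<Sum>a<d. g a)) + (\<Sum>a<d. h a)"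
    by (simp add: sum.distrib sum_product cnj_sum flip: sum_distrib_left)
  finally show ?thesis .
qed

lemma eigval_pair:
  assumes "a < d" "b < d"
  shows "eigval d (a * d + b) = (if a = b then (1 + zeta d ^ b) / 2 else omega d ^ a * cnj (omega d ^ b) / 2)"
  using assms unfolding eigval_def is_diag_index_def by simp

lemma sum_eigval:
  assumes "1 < d"
  shows "(\<Sum>i<d * d. eigval d i) = 1 / 2 * ((\<Sum>a<d. omega d ^ a) * cnj (\<Sum>a<d. omega d ^ a))"
proof -
  have "(\<Sum>i<d * d. eigval d i) = 1 / 2 * ((\<Sum>a<d. omega d ^ a) * cnj (\<Sum>a<d. omega d ^ a))
      + (\<Sum>a<d. (zeta d ^ 1) ^ a / 2)"
    by (rule sum_rank_one_plus_diagonal) (auto simp: eigval_pair)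
  moreover have "(\<Sum>a<d. (zeta d ^ 1) ^ a / 2) = 0"
    using zeta_pow_geometric_sum[of 1 d] assms by (simp flip: sum_divide_distrib)
  ultimately show ?thesis
    by simp
qed

text \<open>Second moment: the squares of the eigenvalues sum to zero when d > 2, because the
  diagonal contributions only involve \<Sigma> \<zeta>^a and \<Sigma> \<zeta>^(2a).\<close>
lemma sum_eigval_sq:
  assumes "2 < d"
  shows "(\<Sum>i<d * d. eigval d i ^ 2) = 0"
proof -
  have "(\<Sum>i<d * d. eigval d i ^ 2) = 1 / 4 * ((\<Sum>a<d. zeta d ^ a) * cnj (\<Sum>a<d. zeta d ^ a))
      + (\<Sum>a<d. (2 * zeta d ^ a + (zeta d ^ 2) ^ a) / 4)"
  proof (rule sum_rank_one_plus_diagonal)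
    fix a b
    assume ab: "a < d" "b < d"
    have sq: "(omega d ^ k) ^ 2 = zeta d ^ k" for k
      unfolding zeta_def by (simp flip: power_mult add: mult.commute)
    show "eigval d (a * d + b) ^ 2 = 1 / 4 * (zeta d ^ a * cnj (zeta d ^ b))
        + (if a = b then (2 * zeta d ^ a + (zeta d ^ 2) ^ a) / 4 else 0)"
    proof (cases "a = b")
      case True
      have "zeta d ^ a * cnj (zeta d ^ a) = 1"
        by (rule unit_mult_cnj) simp
      moreover have "(zeta d ^ 2) ^ a = (zeta d ^ a) ^ 2"
        by (simp flip: power_mult add: mult.commute)
      ultimately show ?thesis
        unfolding eigval_pair[OF ab] using True by (simp add: power2_eq_square field_simps)
    next
      case False
      have "(omega d ^ a * cnj (omega d ^ b) / 2) ^ 2 = (omega d ^ a) ^ 2 * cnj ((omega d ^ b) ^ 2) / 4"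
        by (simp add: power_mult_distrib power_divide)
      then show ?thesis
        using False ab by (simp only: eigval_pair sq if_False) simp
    qed
  qed
  also have "\<dots> = 0"
    using zeta_pow_geometric_sum[of 1 d] zeta_pow_geometric_sum[of 2 d] assms
    by (simp add: sum.distrib flip: sum_divide_distrib sum_distrib_left)
  finally show ?thesis .
qed

lemma moment_filter_nonzero: "0 < k \<Longrightarrow> moment k (filter_mset (\<lambda>z. z \<noteq> 0) M) = moment k M"
  unfolding moment_def by (induction M) auto

lemma moment_mset_upt: "moment k (mset (map f [0..<n])) = (\<Sum>i<n. f i ^ k)"
  unfolding moment_def mset_map[symmetric] sum_mset_sum_list map_map
  by (simp add: interv_sum_list_conv_sum_set_nat lessThan_atLeast0 comp_def)

text \<open>\<Sigma>_(a<d) \<omega>^a = -2/(\<omega> - 1) \<noteq> 0, so the first moment is positive.\<close>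
lemma omega_sum_nonzero:
  assumes "d > 0"
  shows "(\<Sum>a<d. omega d ^ a) \<noteq> 0"
proof -
  have "omega d \<noteq> 1"
    using omega_pow_d[OF assms] by auto
  hence "(\<Sum>a<d. omega d ^ a) = -2 / (omega d - 1)"
    using omega_pow_d[OF assms] by (simp add: geometric_sum)
  with \<open>omega d \<noteq> 1\<close> show ?thesis
    by simp
qed

text \<open>In the order of HOL-Library.Complex_Order, s * cnj s / 2 is a positive real for s \<noteq> 0,
  so its square cannot be bounded by anything times zero.\<close>
lemma half_norm_sq_pos:
  assumes "s \<noteq> 0"
  shows "0 < 1 / 2 * (s * cnj s)"
proof -
  have "0 < (cmod s)\<^sup>2"
    using assms by simp
  hence "0 < Re s ^ 2 + Im s ^ 2"
    by (simp add: cmod_power2)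
  thus ?thesis
    by (simp add: less_complex_def power2_eq_square)
qed

lemma positive_sq_not_le_zero: "0 < (x :: complex) \<Longrightarrow> \<not> x ^ 2 \<le> c * 0"
  by (auto simp: less_complex_def less_eq_complex_def Re_power2 Im_power2)

theorem mainTheorem9:
  fixes d :: nat
  assumes "d > 2"
  shows "completely_positive d (exT d) \<and> trace_preserving d (exT d) \<and> unital d (exT d)
    \<and> primitive d (exT d)
    \<and> mtrace (mat_rep d (exT d)) > 0
    \<and> mtrace (mat_rep d (exT d) * mat_rep d (exT d)) = 0
    \<and> (let \<Lambda> = filter_mset (\<lambda>z. z \<noteq> 0) (map_spectrum d (exT d)) in
         moment 1 \<Lambda> > 0 \<and> moment 2 \<Lambda> = 0 \<and>
         (\<forall>D :: nat. \<not> (moment 1 \<Lambda> ^ 2 \<le> of_nat D ^ (2 - 1) * moment (1 * 2) \<Lambda>)))"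
proof -
  have d: "0 < d" "1 < d"
    using assms by auto
  let ?R = "mat_rep d (exT d)" and ?\<Lambda> = "filter_mset (\<lambda>z. z \<noteq> 0) (map_spectrum d (exT d))"
  define \<mu>1 where "\<mu>1 = 1 / 2 * ((\<Sum>a<d. omega d ^ a) * cnj (\<Sum>a<d. omega d ^ a))"
  have \<mu>1_pos: "0 < \<mu>1"
    unfolding \<mu>1_def by (rule half_norm_sq_pos[OF omega_sum_nonzero[OF d(1)]])
  have moment: "moment k ?\<Lambda> = (\<Sum>i<d * d. eigval d i ^ k)" if "0 < k" for k
    unfolding moment_filter_nonzero[OF that] map_spectrum_exT[OF d(1)] by (rule moment_mset_upt)
  have trace: "mtrace (?R ^\<^sub>m k) = (\<Sum>i<d * d. eigval d i ^ k)" for k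
    by (rule trace_mat_rep_exT_pow[OF d(1)])
  have "mtrace ?R = \<mu>1" "moment 1 ?\<Lambda> = \<mu>1"
    using trace[of 1] moment[of 1] sum_eigval[OF d(2)] by (simp_all add: \<mu>1_def)
  moreover have "mtrace (?R * ?R) = 0" "moment 2 ?\<Lambda> = 0"
    using trace[of 2] moment[of 2] sum_eigval_sq[OF assms]
    by (simp_all add: pow_mat_2[OF mat_rep_carrier])
  ultimately show ?thesis
    unfolding Let_def mult_1
    using exT_completely_positive exT_trace_preserving[OF d(1)] exT_unital exT_primitive[OF d(1)]
      \<mu>1_pos positive_sq_not_le_zero[OF \<mu>1_pos]
    by simp
qed

end
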